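(* Let $Y\in\mathbb{R}^{n\times p}$. Suppose either (i) $Y$ is 1-critical for (BM) with a multiplier $\lambda$ (as in the definition of 1-criticality) satisfying $S(\lambda)\in\mathbb{S}^n_+$, or (ii) $Y$ is 2-critical for (BM) and $Y$ is column rank deficient (i.e. $\operatorname{rank} Y<p$). Then $Y$ is a global minimizer of (BM).
   Context: Let $\mathbb{S}^n$ be the space of real symmetric $n\times n$ matrices, with inner product $A\bullet B=\operatorname{trace}(A^TB)$ (also used for $A\in\mathbb{S}^n$, $B\in\mathbb{R}^{n\times n}$), and $\mathbb{S}^n_+$ the cone of positive semidefinite matrices. Let $m=m_1+m_2$, let $C,A_1,\dots,A_m\in\mathbb{S}^n$, $b\in\mathbb{R}^m$, $\mathcal{A}^*(\lambda)=\sum_i\lambda_iA_i$. Let $\mathscr{X}=\{X\in\mathbb{S}^n_+ : A_i\bullet X=b_i \ (i\le m_1),\ A_i\bullet X\ge b_i\ (m_1<i\le m)\}$; assume $\mathscr{X}$ is nonempty and that $\min_{X\in\mathscr{X}} C\bullet X$ is attained. Problem (BM) is $\min_{Y\in\mathbb{R}^{n\times p}} C\bullet YY^T$ subject to $YY^T\in\mathscr{X}$. For $Y$, let $I(Y)=\{i: A_i\bullet YY^T=b_i\}$ and $S(\lambda)=C-\mathcal{A}^*(\lambda)$. A point $Y$ is 1-critical for (BM) with multiplier $\lambda$ if $YY^T\in\mathscr{X}$, $\lambda\in\mathbb{R}^{m_1}\times\mathbb{R}^{m_2}_+$, $\lambda_i=0$ for $i\notin I(Y)$ and $S(\lambda)Y=0$;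 it is 2-critical if moreover $S(\lambda)\bullet UU^T\ge 0$ for all $U\in\mathbb{R}^{n\times p}$ with $A_i\bullet UY^T=0$ for all $i\in I(Y)$. *)

theory Defs
  imports "HOL-Analysis.Analysis"
begin

text \<open>Matrices: an n x p real matrix is real^'p^'n (rows indexed by 'n).
  Constraint indices are 0-based: i < m1 equality, m1 \<le> i < m1+m2 inequality.\<close>

definition mtrace :: "real^'n^'n \<Rightarrow> real" where
  "mtrace M = (\<Sum>i\<in>UNIV. M $ i $ i)"

definition frob :: "real^'n^'m \<Rightarrow> real^'n^'m \<Rightarrow> real" where
  "frob A B = mtrace (transpose A ** B)"

definition symmetric_mat :: "real^'n^'n \<Rightarrow> bool" where
  "symmetric_mat A \<longleftrightarrow> transpose A = A"

definition psd :: "real^'n^'n \<Rightarrow> bool" where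
  "psd A \<longleftrightarrow> symmetric_mat A \<and> (\<forall>x. 0 \<le> x \<bullet> (A *v x))"

definition feasible_set ::
  "(nat \<Rightarrow> real^'n^'n) \<Rightarrow> (nat \<Rightarrow> real) \<Rightarrow> nat \<Rightarrow> nat \<Rightarrow> (real^'n^'n) set" where
  "feasible_set A b m1 m2 = {X. psd X \<and> (\<forall>i<m1. frob (A i) X = b i)
       \<and> (\<forall>i. m1 \<le> i \<and> i < m1 + m2 \<longrightarrow> frob (A i) X \<ge> b i)}"

definition active_set ::
  "(nat \<Rightarrow> real^'n^'n) \<Rightarrow> (nat \<Rightarrow> real) \<Rightarrow> nat \<Rightarrow> real^'p^'n \<Rightarrow> nat set" where
  "active_set A b m Y = {i. i < m \<and> frob (A i) (Y ** transpose Y) = b i}"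

definition Smat ::
  "real^'n^'n \<Rightarrow> (nat \<Rightarrow> real^'n^'n) \<Rightarrow> nat \<Rightarrow> (nat \<Rightarrow> real) \<Rightarrow> real^'n^'n" where
  "Smat C A m lam = C - (\<Sum>i<m. lam i *\<^sub>R A i)"

definition one_critical ::
  "real^'n^'n \<Rightarrow> (nat \<Rightarrow> real^'n^'n) \<Rightarrow> (nat \<Rightarrow> real) \<Rightarrow> nat \<Rightarrow> nat
     \<Rightarrow> real^'p^'n \<Rightarrow> (nat \<Rightarrow> real) \<Rightarrow> bool" where
  "one_critical C A b m1 m2 Y lam \<longleftrightarrow>
     Y ** transpose Y \<in> feasible_set A b m1 m2
     \<and> (\<forall>i. m1 \<le> i \<and> i < m1 + m2 \<longrightarrow> lam i \<ge> 0)
     \<and> (\<forall>i<m1 + m2. i \<notin> active_set A b (m1 + m2) Y \<longrightarrow> lam i = 0)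
     \<and> Smat C A (m1 + m2) lam ** Y = 0"

definition two_critical ::
  "real^'n^'n \<Rightarrow> (nat \<Rightarrow> real^'n^'n) \<Rightarrow> (nat \<Rightarrow> real) \<Rightarrow> nat \<Rightarrow> nat
     \<Rightarrow> real^'p^'n \<Rightarrow> (nat \<Rightarrow> real) \<Rightarrow> bool" where
  "two_critical C A b m1 m2 Y lam \<longleftrightarrow>
     one_critical C A b m1 m2 Y lam
     \<and> (\<forall>U :: real^'p^'n.
          (\<forall>i\<in>active_set A b (m1 + m2) Y. frob (A i) (U ** transpose Y) = 0)
          \<longrightarrow> frob (Smat C A (m1 + m2) lam) (U ** transpose U) \<ge> 0)"

definition bm_global_min ::
  "real^'n^'n \<Rightarrow> (nat \<Rightarrow> real^'n^'n) \<Rightarrow> (nat \<Rightarrow> real) \<Rightarrow> nat \<Rightarrow> nat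
     \<Rightarrow> real^'p^'n \<Rightarrow> bool" where
  "bm_global_min C A b m1 m2 Y \<longleftrightarrow>
     Y ** transpose Y \<in> feasible_set A b m1 m2
     \<and> (\<forall>Z :: real^'p^'n. Z ** transpose Z \<in> feasible_set A b m1 m2
          \<longrightarrow> frob C (Y ** transpose Y) \<le> frob C (Z ** transpose Z))"

end

theory Submission
  imports Defs
begin

text \<open>Write \<open>S = S(\<lambda>)\<close>. Then \<open>C \<bullet> ZZ\<^sup>T = S \<bullet> ZZ\<^sup>T + \<Sum>\<^sub>i \<lambda>\<^sub>i (A\<^sub>i \<bullet> ZZ\<^sup>T)\<close>. At a 1-critical
  \<open>Y\<close> the first term vanishes because \<open>SY = 0\<close>, and complementary slackness turns the sum
  into \<open>\<Sum>\<^sub>i \<lambda>\<^sub>i b\<^sub>i\<close>; at any feasible \<open>Z\<close> the first term is nonnegative when \<open>S\<close> is positive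
  semidefinite and the sum is at least \<open>\<Sum>\<^sub>i \<lambda>\<^sub>i b\<^sub>i\<close> by the sign conditions on \<open>\<lambda>\<close>.
  So case (i) is weak duality. In case (ii) pick \<open>v \<noteq> 0\<close> with \<open>Yv = 0\<close>; for every \<open>x\<close> the
  direction \<open>U = xv\<^sup>T\<close> satisfies \<open>UY\<^sup>T = 0\<close>, so the second-order condition gives
  \<open>0 \<le> S \<bullet> UU\<^sup>T = |v|\<^sup>2 x\<^sup>TSx\<close>, i.e. \<open>S\<close> is positive semidefinite and case (i) applies.\<close>

lemma frob_eq_sum_entries:
  "frob (A :: real^'n^'m) B = (\<Sum>i\<in>UNIV. \<Sum>j\<in>UNIV. A$i$j * B$i$j)"
proof -
  have "frob A B = (\<Sum>j\<in>UNIV. \<Sum>i\<in>UNIV. A$i$j * B$i$j)"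
    unfolding frob_def mtrace_def matrix_matrix_mult_def transpose_def by simp
  also have "\<dots> = (\<Sum>i\<in>UNIV. \<Sum>j\<in>UNIV. A$i$j * B$i$j)"
    by (rule sum.swap)
  finally show ?thesis .
qed

lemma frob_add_left: "frob (A + B) X = frob A X + frob B X"
  by (simp add: frob_eq_sum_entries algebra_simps sum.distrib)

lemma frob_scaleR_left: "frob (c *\<^sub>R A) X = c * frob A X"
  by (simp add: frob_eq_sum_entries algebra_simps sum_distrib_left)

lemma frob_sum_left: "frob (\<Sum>i\<in>I. f i) X = (\<Sum>i\<in>I. frob (f i) X)"
proof (induction I rule: infinite_finite_induct)
  case (insert i I)
  then show ?case by (simp add: frob_add_left)
qed (simp_all add: frob_eq_sum_entries)

lemma frob_zero_right: "frob A 0 = 0"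
  by (simp add: frob_eq_sum_entries)

lemma frob_mult_transpose_columns:
  fixes S :: "real^'n^'n" and Z :: "real^'p^'n"
  shows "frob S (Z ** transpose Z) = (\<Sum>k\<in>UNIV. column k Z \<bullet> (S *v column k Z))"
proof -
  have "frob S (Z ** transpose Z) = (\<Sum>i\<in>UNIV. \<Sum>j\<in>UNIV. \<Sum>k\<in>UNIV. S$i$j * (Z$i$k * Z$j$k))"
    by (simp add: frob_eq_sum_entries matrix_matrix_mult_def transpose_def sum_distrib_left)
  also have "\<dots> = (\<Sum>i\<in>UNIV. \<Sum>k\<in>UNIV. \<Sum>j\<in>UNIV. S$i$j * (Z$i$k * Z$j$k))"
    by (rule sum.cong[OF refl], rule sum.swap)
  also have "\<dots> = (\<Sum>k\<in>UNIV. \<Sum>i\<in>UNIV. \<Sum>j\<in>UNIV. S$i$j * (Z$i$k * Z$j$k))"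
    by (rule sum.swap)
  also have "\<dots> = (\<Sum>k\<in>UNIV. column k Z \<bullet> (S *v column k Z))"
    by (simp add: column_def inner_vec_def matrix_vector_mult_def sum_distrib_left
        mult.commute mult.left_commute)
  finally show ?thesis .
qed

lemma frob_mult_transpose_nonneg_if_psd:
  fixes S :: "real^'n^'n" and Z :: "real^'p^'n"
  assumes "psd S"
  shows "0 \<le> frob S (Z ** transpose Z)"
  using assms by (simp add: frob_mult_transpose_columns psd_def sum_nonneg)

lemma column_matrix_mult: "column k (S ** Y) = S *v column k Y"
  by (simp add: vec_eq_iff column_def matrix_matrix_mult_def matrix_vector_mult_def)

lemma frob_mult_transpose_eq_0_if_annihilated:
  fixes S :: "real^'n^'n" and Y :: "real^'p^'n"
  assumes "S ** Y = 0"
  shows "frob S (Y ** transpose Y) = 0"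
proof -
  have "S *v column k Y = 0" for k
    using assms column_matrix_mult[of k S Y] by (simp add: column_def vec_eq_iff)
  then show ?thesis by (simp add: frob_mult_transpose_columns)
qed

lemma frob_split_Smat:
  "frob C X = frob (Smat C A m lam) X + (\<Sum>i<m. lam i * frob (A i) X)"
proof -
  have "frob C X = frob (Smat C A m lam + (\<Sum>i<m. lam i *\<^sub>R A i)) X"
    by (simp add: Smat_def)
  also have "\<dots> = frob (Smat C A m lam) X + (\<Sum>i<m. lam i * frob (A i) X)"
    by (simp add: frob_add_left frob_sum_left frob_scaleR_left)
  finally show ?thesis .
qed

lemma one_critical_objective:
  assumes "one_critical C A b m1 m2 (Y :: real^'p^'n) lam"
  shows "frob C (Y ** transpose Y) = (\<Sum>i<m1 + m2. lam i * b i)"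
proof -
  have "frob (Smat C A (m1 + m2) lam) (Y ** transpose Y) = 0"
    using assms by (simp add: one_critical_def frob_mult_transpose_eq_0_if_annihilated)
  moreover have "(\<Sum>i<m1 + m2. lam i * frob (A i) (Y ** transpose Y)) = (\<Sum>i<m1 + m2. lam i * b i)"
    using assms by (intro sum.cong) (auto simp: one_critical_def active_set_def)
  ultimately show ?thesis
    by (simp add: frob_split_Smat[of C _ A "m1 + m2" lam])
qed

lemma weak_duality:
  assumes "one_critical C A b m1 m2 (Y :: real^'p^'n) lam"
    and "psd (Smat C A (m1 + m2) lam)"
    and feasible: "Z ** transpose Z \<in> feasible_set A b m1 m2"
  shows "(\<Sum>i<m1 + m2. lam i * b i) \<le> frob C (Z ** transpose Z)"
proof -
  have lam_nonneg: "0 \<le> lam i" if "m1 \<le> i" "i < m1 + m2" for i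
    using assms(1) that by (simp add: one_critical_def)
  have "(\<Sum>i<m1 + m2. lam i * b i) \<le> (\<Sum>i<m1 + m2. lam i * frob (A i) (Z ** transpose Z))"
  proof (rule sum_mono)
    fix i assume "i \<in> {..<m1 + m2}"
    then show "lam i * b i \<le> lam i * frob (A i) (Z ** transpose Z)"
      using feasible lam_nonneg by (cases "i < m1") (auto simp: feasible_set_def intro: mult_left_mono)
  qed
  also have "\<dots> \<le> frob C (Z ** transpose Z)"
    using frob_mult_transpose_nonneg_if_psd[OF assms(2), of Z]
    by (simp add: frob_split_Smat[of C _ A "m1 + m2" lam])
  finally show ?thesis .
qed

lemma bm_global_min_if_one_critical_psd:
  assumes "one_critical C A b m1 m2 (Y :: real^'p^'n) lam"
    and "psd (Smat C A (m1 + m2) lam)"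
  shows "bm_global_min C A b m1 m2 Y"
  using assms(1) one_critical_objective[OF assms(1)] weak_duality[OF assms]
  unfolding bm_global_min_def one_critical_def by auto

definition outer_prod :: "real^'n \<Rightarrow> real^'p \<Rightarrow> real^'p^'n" where
  "outer_prod x v = (\<chi> i j. x$i * v$j)"

lemma column_outer_prod: "column k (outer_prod x v) = v$k *\<^sub>R x"
  by (simp add: vec_eq_iff column_def outer_prod_def)

lemma frob_outer_prod:
  "frob S (outer_prod x v ** transpose (outer_prod x v)) = (v \<bullet> v) * (x \<bullet> (S *v x))"
proof -
  have "column k (outer_prod x v) \<bullet> (S *v column k (outer_prod x v)) = (v$k * v$k) * (x \<bullet> (S *v x))" for k
    by (simp add: column_outer_prod matrix_vector_mult_scaleR)
  then show ?thesis
    by (simp add: frob_mult_transpose_columns inner_vec_def[of v v] sum_distrib_right)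
qed

lemma outer_prod_mult_transpose_eq_0:
  assumes "Y *v v = 0"
  shows "outer_prod x v ** transpose Y = 0"
proof -
  have "(outer_prod x v ** transpose Y)$i$j = x$i * (Y *v v)$j" for i j
    by (simp add: outer_prod_def matrix_matrix_mult_def matrix_vector_mult_def transpose_def
        sum_distrib_left mult.commute mult.left_commute)
  with assms show ?thesis
    by (simp add: vec_eq_iff)
qed

lemma symmetric_mat_iff_entries: "symmetric_mat M \<longleftrightarrow> (\<forall>i j. M$j$i = M$i$j)"
  by (auto simp: symmetric_mat_def transpose_def vec_eq_iff)

lemma symmetric_Smat:
  assumes "symmetric_mat C" and "\<forall>i < m. symmetric_mat (A i)"
  shows "symmetric_mat (Smat C A m lam)"
  using assms by (simp add: symmetric_mat_iff_entries Smat_def sum_component)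

lemma psd_Smat_if_two_critical_rank_deficient:
  assumes "symmetric_mat C"
    and "\<forall>i < m1 + m2. symmetric_mat (A i)"
    and two_crit: "two_critical C A b m1 m2 (Y :: real^'p^'n) lam"
    and "rank Y < CARD('p)"
  shows "psd (Smat C A (m1 + m2) lam)"
proof -
  obtain v where "v \<noteq> 0" and "Y *v v = 0"
    using assms(4) matrix_nonfull_linear_equations_eq[of Y] by auto
  have "0 \<le> x \<bullet> (Smat C A (m1 + m2) lam *v x)" for x
  proof -
    have "0 \<le> frob (Smat C A (m1 + m2) lam) (outer_prod x v ** transpose (outer_prod x v))"
      using two_crit unfolding two_critical_def
      by (simp add: outer_prod_mult_transpose_eq_0[OF \<open>Y *v v = 0\<close>] frob_zero_right)
    moreover have "0 < v \<bullet> v"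
      using \<open>v \<noteq> 0\<close> by simp
    ultimately show ?thesis
      by (simp add: frob_outer_prod zero_le_mult_iff)
  qed
  then show ?thesis
    using symmetric_Smat[OF assms(1,2)] by (simp add: psd_def)
qed

theorem lemma4:
  fixes C :: "real^'n^'n" and A :: "nat \<Rightarrow> real^'n^'n" and b :: "nat \<Rightarrow> real"
    and m1 m2 :: nat and Y :: "real^'p^'n"
  assumes symC: "symmetric_mat C"
    and symA: "\<forall>i < m1 + m2. symmetric_mat (A i)"
    and nonempty: "feasible_set A b m1 m2 \<noteq> {}"
    and attained: "\<exists>X\<in>feasible_set A b m1 m2. \<forall>X'\<in>feasible_set A b m1 m2. frob C X \<le> frob C X'"
    and crit: "(\<exists>lam. one_critical C A b m1 m2 Y lam \<and> psd (Smat C A (m1 + m2) lam))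
             \<or> ((\<exists>lam. two_critical C A b m1 m2 Y lam) \<and> rank Y < CARD('p))"
  shows "bm_global_min C A b m1 m2 Y"
  using crit
proof
  assume "\<exists>lam. one_critical C A b m1 m2 Y lam \<and> psd (Smat C A (m1 + m2) lam)"
  then show ?thesis
    using bm_global_min_if_one_critical_psd by blast
next
  assume "(\<exists>lam. two_critical C A b m1 m2 Y lam) \<and> rank Y < CARD('p)"
  then obtain lam where "two_critical C A b m1 m2 Y lam" and "rank Y < CARD('p)"
    by blast
  then show ?thesis
    using psd_Smat_if_two_critical_rank_deficient[OF symC symA] bm_global_min_if_one_critical_psd
    unfolding two_critical_def by blast
qed

end
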